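(* Let $n\ge1$, let $\Lambda$ be a completely positive trace-preserving (CPTP) map on operators on $\mathcal{H}=(\mathbb{C}^3)^{\otimes n}$, and suppose every Pauli $P\in\mathbb{P}_n$ is implemented noisily as $\hat{\mathcal{P}}=\mathcal{P}\circ\Lambda$ (gate-independent noise). Let $\hat\rho_0$ be a (noisy) initial state and $\hat\Pi_c$ a (noisy) Hermitian measurement effect on $\mathcal{H}$, and for $m\ge1$ define the LRB average $$p_{\Pi_c}(m)=\frac{1}{|\mathbb{P}_n|^m}\sum_{P_1,\dots,P_m\in\mathbb{P}_n}\operatorname{tr}\big(\hat\Pi_c\,\hat{\mathcal{P}}_m\circ\cdots\circ\hat{\mathcal{P}}_1(\hat\rho_0)\big).$$ Let $Q=Q_\Lambda$ be the $2^n\times 2^n$ matrix indexed by $\{c,l\}^n$ with entries $Q_{\bm i,\bm j}=\operatorname{tr}(\Pi_{\bm i}\Lambda(\widetilde{\Pi}_{\bm j}))$. Then there is a state $\tilde\rho_0$ on $\mathcal{H}$ determined by $\hat\rho_0$ (and $\Lambda$) such that for every $m\ge1$ $$p_{\Pi_c}(m)=\sum_{\bm i,\bm j\in\{c,l\}^n}\operatorname{tr}(\widetilde{\Pi}_{\bm i}\hat\Pi_c)\,(Q^{m-1})_{\bm i,\bm j}\,\operatorname{tr}(\Pi_{\bm j}\tilde\rho_0).$$ Moreover the average leakage rate of $\Lambda$ equals $L_{\mathrm{ave}}(\Lambda)=1-Q_{c^n,c^n}$ and the average seepage rate equals $S_{\mathrm{ave}}(\Lambda)=\frac{1}{3^n-2^n}\sum_{\bm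 i\ne c^n}\dim(\mathcal{H}_{\bm i})\,Q_{c^n,\bm i}$, where $c^n=(c,\dots,c)$.
   Context: A single qubit with leakage is $\mathbb{C}^3$ with basis $\{|0\rangle,|1\rangle,|2\rangle\}$; single-qubit projectors $\Pi_c=|0\rangle\langle0|+|1\rangle\langle1|$ (computational) and $\Pi_l=|2\rangle\langle2|$ (leakage). For $\bm i\in\{c,l\}^n$, $\Pi_{\bm i}=\bigotimes_k\Pi_{i_k}$ with range $\mathcal{H}_{\bm i}$ and $\widetilde{\Pi}_{\bm i}=\Pi_{\bm i}/\dim(\mathcal{H}_{\bm i})$. The $n$-qubit computational projector is $\Pi_c:=\Pi_{c^n}$ (rank $2^n$), the leakage projector is $\Pi_l:=\mathbb{I}-\Pi_c$ (rank $3^n-2^n$), and $\widetilde{\Pi}_c=\Pi_c/2^n$, $\widetilde{\Pi}_l=\Pi_l/(3^n-2^n)$. The average leakage and seepage rates of a channel $\Lambda$ are $L_{\mathrm{ave}}(\Lambda)=\operatorname{tr}(\Pi_l\Lambda(\widetilde{\Pi}_c))$ and $S_{\mathrm{ave}}(\Lambda)=\operatorname{tr}(\Pi_c\Lambda(\widetilde{\Pi}_l))$. Pauli group: $\mathbb{P}=\{\pm1,\pm\mathrm{i}\}\times\{I,X,Y,Z\}$, $\mathbb{P}_n=\mathbb{P}^{\times n}$; for $U\in\mathbb{P}$ the qutrit channel is $\rho\mapsto(U\oplus1)\rho(U\oplus1)^\dagger$ ($U$ on $\operatorname{span}\{|0\rangle,|1\rangle\}$, identity on $|2\rangle$), and for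 $P=(P_1,\dots,P_n)$ the ideal channel $\mathcal{P}$ is the tensor product of these. *)

theory Defs
  imports Complex_Main
begin

type_synonym 'a op = "'a \<Rightarrow> 'a \<Rightarrow> complex"

definition basis :: "nat \<Rightarrow> nat list set" where
  "basis n = {x. length x = n \<and> set x \<subseteq> {0,1,2}}"

definition supp_on :: "'a set \<Rightarrow> 'a op \<Rightarrow> bool" where
  "supp_on S A \<longleftrightarrow> (\<forall>x y. (x \<notin> S \<or> y \<notin> S) \<longrightarrow> A x y = 0)"

definition opsp :: "nat \<Rightarrow> nat list op set" where
  "opsp n = {A. supp_on (basis n) A}"

definition mtr :: "'a set \<Rightarrow> 'a op \<Rightarrow> complex" where
  "mtr S A = (\<Sum>x\<in>S. A x x)"

definition mmul :: "'a set \<Rightarrow> 'a op \<Rightarrow> 'a op \<Rightarrow> 'a op" where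
  "mmul S A B = (\<lambda>x y. \<Sum>z\<in>S. A x z * B z y)"

definition madj :: "'a op \<Rightarrow> 'a op" where
  "madj A = (\<lambda>x y. cnj (A y x))"

definition hermitian_on :: "'a set \<Rightarrow> 'a op \<Rightarrow> bool" where
  "hermitian_on S A \<longleftrightarrow> (\<forall>x\<in>S. \<forall>y\<in>S. A x y = cnj (A y x))"

definition psd_on :: "'a set \<Rightarrow> 'a op \<Rightarrow> bool" where
  "psd_on S A \<longleftrightarrow> (\<forall>v::'a \<Rightarrow> complex.
      let q = (\<Sum>x\<in>S. \<Sum>y\<in>S. cnj (v x) * A x y * v y) in Im q = 0 \<and> Re q \<ge> 0)"

definition is_state :: "nat \<Rightarrow> nat list op \<Rightarrow> bool" where
  "is_state n \<rho> \<longleftrightarrow> \<rho> \<in> opsp n \<and> psd_on (basis n) \<rho> \<and> mtr (basis n) \<rho> = 1"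

type_synonym chan = "nat list op \<Rightarrow> nat list op"

definition linear_on_ops :: "nat \<Rightarrow> chan \<Rightarrow> bool" where
  "linear_on_ops n \<Lambda> \<longleftrightarrow> (\<forall>A\<in>opsp n. \<forall>B\<in>opsp n. \<forall>a b::complex.
      \<Lambda> (\<lambda>x y. a * A x y + b * B x y) = (\<lambda>x y. a * \<Lambda> A x y + b * \<Lambda> B x y))"

text \<open>Ancilla extension id_d tensor Lambda acting on operators indexed by {0..<d} x basis n.\<close>
definition ampl :: "chan \<Rightarrow> (nat \<times> nat list) op \<Rightarrow> (nat \<times> nat list) op" where
  "ampl \<Lambda> X = (\<lambda>(a,x) (b,y). \<Lambda> (\<lambda>x' y'. X (a,x') (b,y')) x y)"

definition completely_positive :: "nat \<Rightarrow> chan \<Rightarrow> bool" where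
  "completely_positive n \<Lambda> \<longleftrightarrow> (\<forall>d::nat. \<forall>X.
      supp_on ({0..<d} \<times> basis n) X \<and> psd_on ({0..<d} \<times> basis n) X \<longrightarrow>
      psd_on ({0..<d} \<times> basis n) (ampl \<Lambda> X))"

definition trace_preserving :: "nat \<Rightarrow> chan \<Rightarrow> bool" where
  "trace_preserving n \<Lambda> \<longleftrightarrow> (\<forall>A\<in>opsp n. mtr (basis n) (\<Lambda> A) = mtr (basis n) A)"

definition cptp :: "nat \<Rightarrow> chan \<Rightarrow> bool" where
  "cptp n \<Lambda> \<longleftrightarrow> (\<forall>A\<in>opsp n. \<Lambda> A \<in> opsp n) \<and> linear_on_ops n \<Lambda>
      \<and> completely_positive n \<Lambda> \<and> trace_preserving n \<Lambda>"

text \<open>A single-qubit Pauli in P = {+-1,+-i} x {I,X,Y,Z} is encoded as (k,p) with k,p < 4: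
  phase i^k and Pauli matrix sigma_p (0=I,1=X,2=Y,3=Z).\<close>

definition sigma :: "nat \<Rightarrow> nat \<Rightarrow> nat \<Rightarrow> complex" where
  "sigma p a b =
    (if p = 0 then (if a = b then 1 else 0)
     else if p = 1 then (if a \<noteq> b then 1 else 0)
     else if p = 2 then (if a = 0 \<and> b = 1 then - \<i> else if a = 1 \<and> b = 0 then \<i> else 0)
     else (if a = b then (if a = 0 then 1 else -1) else 0))"

definition pauli_qutrit :: "nat \<times> nat \<Rightarrow> nat \<Rightarrow> nat \<Rightarrow> complex" where
  "pauli_qutrit U a b =
    (if a < 2 \<and> b < 2 then \<i> ^ fst U * sigma (snd U) a b
     else if a = 2 \<and> b = 2 then 1 else 0)"

definition pauli1 :: "(nat \<times> nat) set" where
  "pauli1 = {0..<4} \<times> {0..<4}"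

definition pauli_grp :: "nat \<Rightarrow> (nat \<times> nat) list set" where
  "pauli_grp n = {P. length P = n \<and> set P \<subseteq> pauli1}"

definition pauli_op :: "nat \<Rightarrow> (nat \<times> nat) list \<Rightarrow> nat list op" where
  "pauli_op n P = (\<lambda>x y. if x \<in> basis n \<and> y \<in> basis n
      then (\<Prod>k<n. pauli_qutrit (P ! k) (x ! k) (y ! k)) else 0)"

definition pauli_chan :: "nat \<Rightarrow> (nat \<times> nat) list \<Rightarrow> chan" where
  "pauli_chan n P \<rho> = mmul (basis n) (mmul (basis n) (pauli_op n P) \<rho>) (madj (pauli_op n P))"

fun noisy_seq :: "nat \<Rightarrow> chan \<Rightarrow> (nat \<times> nat) list list \<Rightarrow> nat list op \<Rightarrow> nat list op" where
  "noisy_seq n \<Lambda> [] \<rho> = \<rho>"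
| "noisy_seq n \<Lambda> (P # Ps) \<rho> = noisy_seq n \<Lambda> Ps (pauli_chan n P (\<Lambda> \<rho>))"

definition lrb_avg :: "nat \<Rightarrow> chan \<Rightarrow> nat list op \<Rightarrow> nat list op \<Rightarrow> nat \<Rightarrow> complex" where
  "lrb_avg n \<Lambda> E \<rho>0 m =
     (1 / of_nat (card (pauli_grp n)) ^ m) *
     (\<Sum>Ps\<in>{Ps. length Ps = m \<and> set Ps \<subseteq> pauli_grp n}.
        mtr (basis n) (mmul (basis n) E (noisy_seq n \<Lambda> Ps \<rho>0)))"

datatype cl = Cc | Ll

definition idx :: "nat \<Rightarrow> cl list set" where
  "idx n = {i. length i = n}"

definition in_sector :: "nat \<Rightarrow> cl list \<Rightarrow> nat list \<Rightarrow> bool" where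
  "in_sector n i x \<longleftrightarrow> x \<in> basis n \<and> (\<forall>k<n. (x ! k < 2) \<longleftrightarrow> i ! k = Cc)"

definition proj :: "nat \<Rightarrow> cl list \<Rightarrow> nat list op" where
  "proj n i = (\<lambda>x y. if x = y \<and> in_sector n i x then 1 else 0)"

definition dimH :: "nat \<Rightarrow> cl list \<Rightarrow> nat" where
  "dimH n i = card {x. in_sector n i x}"

definition nproj :: "nat \<Rightarrow> cl list \<Rightarrow> nat list op" where
  "nproj n i = (\<lambda>x y. proj n i x y / of_nat (dimH n i))"

definition idop :: "nat \<Rightarrow> nat list op" where
  "idop n = (\<lambda>x y. if x = y \<and> x \<in> basis n then 1 else 0)"

definition Pi_c :: "nat \<Rightarrow> nat list op" where
  "Pi_c n = proj n (replicate n Cc)"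

definition Pi_l :: "nat \<Rightarrow> nat list op" where
  "Pi_l n = (\<lambda>x y. idop n x y - Pi_c n x y)"

definition nPi_c :: "nat \<Rightarrow> nat list op" where
  "nPi_c n = (\<lambda>x y. Pi_c n x y / 2 ^ n)"

definition nPi_l :: "nat \<Rightarrow> nat list op" where
  "nPi_l n = (\<lambda>x y. Pi_l n x y / (3 ^ n - 2 ^ n))"

definition L_ave :: "nat \<Rightarrow> chan \<Rightarrow> complex" where
  "L_ave n \<Lambda> = mtr (basis n) (mmul (basis n) (Pi_l n) (\<Lambda> (nPi_c n)))"

definition S_ave :: "nat \<Rightarrow> chan \<Rightarrow> complex" where
  "S_ave n \<Lambda> = mtr (basis n) (mmul (basis n) (Pi_c n) (\<Lambda> (nPi_l n)))"

definition Qmat :: "nat \<Rightarrow> chan \<Rightarrow> cl list \<Rightarrow> cl list \<Rightarrow> complex" where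
  "Qmat n \<Lambda> i j = mtr (basis n) (mmul (basis n) (proj n i) (\<Lambda> (nproj n j)))"

fun mpow :: "'a set \<Rightarrow> ('a \<Rightarrow> 'a \<Rightarrow> complex) \<Rightarrow> nat \<Rightarrow> 'a \<Rightarrow> 'a \<Rightarrow> complex" where
  "mpow S Q 0 = (\<lambda>i j. if i = j then 1 else 0)"
| "mpow S Q (Suc k) = (\<lambda>i j. \<Sum>l\<in>S. mpow S Q k i l * Q l j)"

end

theory Submission
  imports Defs
begin

(* Averaging U rho U^dagger over the Pauli group, each Pauli acting as U (+) 1 on every qutrit, is a
   twirl onto the sector operators sum_i c_i nPi_i: only the traces tr(Pi_i rho) survive.  Hence after
   the first noisy gate the averaged state has this form, and every further averaged gate (noise
   followed by twirl) multiplies the coefficient vector by Q.  Averaging m gates therefore gives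
   sum_i (Q^(m-1) v)_i nPi_i with v_j = tr(Pi_j Lambda(rho0)), so the state in the theorem is
   Lambda(rho0), a state by complete positivity.  The leakage and seepage rates follow by expanding
   Pi_l and nPi_l in the sector projectors and using trace preservation. *)

lemma sum_lists_length_Suc:
  "(\<Sum>xs\<in>{xs. length xs = Suc m \<and> set xs \<subseteq> A}. f xs)
    = (\<Sum>a\<in>A. \<Sum>xs\<in>{xs. length xs = m \<and> set xs \<subseteq> A}. f (a # xs))"
proof -
  have L: "{xs. length xs = k \<and> set xs \<subseteq> A} = {xs. set xs \<subseteq> A \<and> length xs = k}" for k by auto
  have "(\<Sum>xs\<in>{xs. set xs \<subseteq> A \<and> length xs = Suc m}. f xs)
      = (\<Sum>(xs, a)\<in>{xs. set xs \<subseteq> A \<and> length xs = m} \<times> A. f (a # xs))"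
    unfolding lists_length_Suc_eq by (subst sum.reindex) (auto simp: inj_on_def split_def)
  also have "\<dots> = (\<Sum>xs\<in>{xs. set xs \<subseteq> A \<and> length xs = m}. \<Sum>a\<in>A. f (a # xs))"
    by (simp add: sum.cartesian_product)
  finally show ?thesis unfolding L by (simp add: sum.swap[of _ A])
qed

lemma sum_lists_length_prod_nth:
  fixes f :: "nat \<Rightarrow> 'a \<Rightarrow> 'b::comm_semiring_1"
  shows "(\<Sum>xs\<in>{xs. length xs = n \<and> set xs \<subseteq> A}. \<Prod>k<n. f k (xs ! k)) = (\<Prod>k<n. \<Sum>a\<in>A. f k a)"
proof (induction n arbitrary: f)
  case 0
  have "{xs. length xs = 0 \<and> set xs \<subseteq> A} = {[]}" by auto
  then show ?case by simp
next
  case (Suc n)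
  have "(\<Sum>xs\<in>{xs. length xs = Suc n \<and> set xs \<subseteq> A}. \<Prod>k<Suc n. f k (xs ! k))
      = (\<Sum>a\<in>A. \<Sum>xs\<in>{xs. length xs = n \<and> set xs \<subseteq> A}. f 0 a * (\<Prod>k<n. f (Suc k) (xs ! k)))"
    unfolding sum_lists_length_Suc by (simp del: prod.lessThan_Suc add: prod.lessThan_Suc_shift)
  also have "\<dots> = (\<Sum>a\<in>A. f 0 a) * (\<Prod>k<n. \<Sum>a\<in>A. f (Suc k) a)"
    by (simp add: Suc.IH[of "\<lambda>k. f (Suc k)"] sum_distrib_left[symmetric] sum_distrib_right)
  also have "\<dots> = (\<Prod>k<Suc n. \<Sum>a\<in>A. f k a)"
    by (simp del: prod.lessThan_Suc add: prod.lessThan_Suc_shift)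
  finally show ?case .
qed

lemma finite_basis: "finite (basis n)"
proof -
  have "basis n = {xs. set xs \<subseteq> {0, 1, 2} \<and> length xs = n}" unfolding basis_def by auto
  then show ?thesis using finite_lists_length_eq[of "{0, 1, 2::nat}" n] by simp
qed

lemma finite_idx: "finite (idx n)"
proof -
  have "(UNIV :: cl set) = {Cc, Ll}" using cl.exhaust by auto
  then have "finite (UNIV :: cl set)" by (metis finite.emptyI finite.insertI)
  then show ?thesis
    using finite_lists_length_eq[of "UNIV :: cl set" n] unfolding idx_def by simp
qed

lemma basis_nth: "x \<in> basis n \<Longrightarrow> k < n \<Longrightarrow> x ! k \<in> {0, 1, 2}"
  unfolding basis_def by (auto dest!: nth_mem)

definition sector :: "nat list \<Rightarrow> cl list" where
  "sector x = map (\<lambda>a. if a < 2 then Cc else Ll) x"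

lemma sector_in_idx: "x \<in> basis n \<Longrightarrow> sector x \<in> idx n"
  unfolding basis_def idx_def sector_def by auto

lemma in_sector_iff_eq_sector:
  assumes "x \<in> basis n" "i \<in> idx n"
  shows "in_sector n i x \<longleftrightarrow> i = sector x"
proof -
  have len: "length x = n" "length i = n" using assms unfolding basis_def idx_def by auto
  have "(\<forall>k<n. (x ! k < 2) \<longleftrightarrow> i ! k = Cc) \<longleftrightarrow> i = sector x"
    using len unfolding sector_def list_eq_iff_nth_eq by (auto intro: cl.exhaust)
  then show ?thesis using assms(1) unfolding in_sector_def by blast
qed

lemma sector_eq_iff: "length x = length w \<Longrightarrow> sector x = sector w \<longleftrightarrow> (\<forall>k<length x. x ! k < 2 \<longleftrightarrow> w ! k < 2)"
  unfolding sector_def list_eq_iff_nth_eq by auto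

lemma dimH_eq_sum: "of_nat (dimH n i) = (\<Sum>x\<in>basis n. if in_sector n i x then 1 else 0)"
proof -
  have "{x. in_sector n i x} = {x \<in> basis n. in_sector n i x}" by (auto simp: in_sector_def)
  then show ?thesis unfolding dimH_def by (simp add: sum.If_cases finite_basis Int_def)
qed

lemma dimH_eq_prod:
  assumes "i \<in> idx n"
  shows "dimH n i = (\<Prod>k<n. if i ! k = Cc then 2 else 1)"
proof -
  have "dimH n i = (\<Sum>x\<in>basis n. \<Prod>k<n. if x ! k < 2 \<longleftrightarrow> i ! k = Cc then 1 else 0)"
    unfolding dimH_eq_sum[where 'a = nat, simplified]
    by (intro sum.cong refl) (auto simp: in_sector_def prod_zero_iff)
  also have "\<dots> = (\<Prod>k<n. \<Sum>a\<in>{0, 1, 2::nat}. if a < 2 \<longleftrightarrow> i ! k = Cc then 1 else 0)"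
    unfolding basis_def by (rule sum_lists_length_prod_nth)
  also have "\<dots> = (\<Prod>k<n. if i ! k = Cc then 2 else 1)"
    by (intro prod.cong refl) simp
  finally show ?thesis .
qed

lemma dimH_sector:
  assumes "x \<in> basis n"
  shows "dimH n (sector x) = (\<Prod>k<n. if x ! k < 2 then 2 else 1)"
proof -
  have "length x = n" using assms unfolding basis_def by simp
  then show ?thesis
    unfolding dimH_eq_prod[OF sector_in_idx[OF assms]] by (intro prod.cong) (auto simp: sector_def)
qed

lemma dimH_pos: "i \<in> idx n \<Longrightarrow> dimH n i > 0"
  by (simp add: dimH_eq_prod)

definition sector_comb :: "nat \<Rightarrow> (cl list \<Rightarrow> complex) \<Rightarrow> nat list op" where
  "sector_comb n c = (\<lambda>x y. \<Sum>i\<in>idx n. c i * nproj n i x y)"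

lemma sector_comb_apply:
  assumes "x \<in> basis n"
  shows "sector_comb n c x y = (if x = y then c (sector x) / of_nat (dimH n (sector x)) else 0)"
proof -
  have "sector_comb n c x y = (\<Sum>i\<in>idx n. if i = sector x then c i * (if x = y then 1 / of_nat (dimH n i) else 0) else 0)"
    unfolding sector_comb_def nproj_def proj_def
    by (intro sum.cong refl) (auto simp: in_sector_iff_eq_sector[OF assms])
  then show ?thesis using sector_in_idx[OF assms] by (simp add: finite_idx)
qed

lemma sector_comb_outside: "\<not> (x \<in> basis n \<and> y \<in> basis n) \<Longrightarrow> sector_comb n c x y = 0"
  unfolding sector_comb_def nproj_def proj_def in_sector_def by (auto intro: sum.neutral)

lemma sum_sector_comb: "(\<Sum>a\<in>F. sector_comb n (c a) x y) = sector_comb n (\<lambda>i. \<Sum>a\<in>F. c a i) x y"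
  unfolding sector_comb_def by (simp add: sum_distrib_right sum.swap[of _ F])

lemma finite_pauli_grp: "finite (pauli_grp n)"
  using finite_lists_length_eq[of pauli1 n] unfolding pauli_grp_def pauli1_def by (simp add: conj_commute)

lemma card_pauli_grp: "card (pauli_grp n) = 16 ^ n"
  using card_lists_length_eq[of pauli1 n] unfolding pauli_grp_def pauli1_def by (simp add: conj_commute)

lemma sum_pauli1_qutrit:
  assumes "a \<in> {0, 1, 2}" "b \<in> {0, 1, 2}" "c \<in> {0, 1, 2}" "d \<in> {0, 1, 2}"
  shows "(\<Sum>U\<in>pauli1. pauli_qutrit U a c * cnj (pauli_qutrit U b d))
    = (if a = b \<and> c = d \<and> (a < 2 \<longleftrightarrow> c < 2) then 16 / (if a < 2 then 2 else 1) else 0)"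
proof -
  have "(\<Sum>U\<in>pauli1. g U) = (\<Sum>k<4. \<Sum>p<4. g (k, p))" for g :: "nat \<times> nat \<Rightarrow> complex"
    unfolding pauli1_def by (simp add: sum.cartesian_product lessThan_atLeast0)
  then show ?thesis
    using assms by (auto simp: numeral_eq_Suc pauli_qutrit_def sigma_def)
qed

lemma sum_pauli_grp_op:
  assumes "x \<in> basis n" "y \<in> basis n" "w \<in> basis n" "z \<in> basis n"
  shows "(\<Sum>P\<in>pauli_grp n. pauli_op n P x w * cnj (pauli_op n P y z))
    = (if x = y \<and> w = z \<and> sector x = sector w then 16 ^ n / of_nat (dimH n (sector x)) else 0)"
proof -
  have len: "length x = n" "length y = n" "length w = n" "length z = n"
    using assms unfolding basis_def by auto
  let ?C = "\<lambda>k. x ! k = y ! k \<and> w ! k = z ! k \<and> (x ! k < 2 \<longleftrightarrow> w ! k < 2)"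
  have "(\<Sum>P\<in>pauli_grp n. pauli_op n P x w * cnj (pauli_op n P y z))
      = (\<Sum>P\<in>pauli_grp n. \<Prod>k<n. pauli_qutrit (P ! k) (x ! k) (w ! k) * cnj (pauli_qutrit (P ! k) (y ! k) (z ! k)))"
    using assms unfolding pauli_op_def by (simp add: prod.distrib cnj_prod)
  also have "\<dots> = (\<Prod>k<n. \<Sum>U\<in>pauli1. pauli_qutrit U (x ! k) (w ! k) * cnj (pauli_qutrit U (y ! k) (z ! k)))"
    unfolding pauli_grp_def by (rule sum_lists_length_prod_nth)
  also have "\<dots> = (\<Prod>k<n. if ?C k then 16 / (if x ! k < 2 then 2 else 1) else 0)"
    using assms by (intro prod.cong refl sum_pauli1_qutrit) (auto dest: basis_nth)
  also have "\<dots> = (if x = y \<and> w = z \<and> sector x = sector w then 16 ^ n / of_nat (dimH n (sector x)) else 0)"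
  proof (cases "x = y \<and> w = z \<and> sector x = sector w")
    case True
    then have "(\<Prod>k<n. if ?C k then 16 / (if x ! k < 2 then 2 else 1) else 0)
        = (\<Prod>k<n. 16 / (if x ! k < 2 then 2 else 1) :: complex)"
      using len sector_eq_iff[of x w] by (intro prod.cong) auto
    also have "\<dots> = 16 ^ n / of_nat (dimH n (sector x))"
      by (simp only: prod_dividef prod_constant card_lessThan)
        (simp add: dimH_sector[OF assms(1)] if_distrib cong: if_cong)
    finally have "(\<Prod>k<n. if ?C k then 16 / (if x ! k < 2 then 2 else 1) else 0)
        = 16 ^ n / (of_nat (dimH n (sector x)) :: complex)" .
    then show ?thesis unfolding if_P[OF True] .
  next
    case False
    then have "\<exists>k<n. \<not> ?C k" using len sector_eq_iff[of x w] by (auto simp: list_eq_iff_nth_eq)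
    then show ?thesis using False by (auto simp: prod_zero_iff)
  qed
  finally show ?thesis .
qed

lemma mtr_mmul_proj:
  "mtr (basis n) (mmul (basis n) (proj n i) X) = (\<Sum>z\<in>basis n. if in_sector n i z then X z z else 0)"
  unfolding mtr_def mmul_def proj_def
  by (intro sum.cong refl) (simp add: if_distrib if_distribR sum.delta finite_basis cong: if_cong)

lemma sum_pauli_chan_eq_sector_comb:
  "(\<Sum>P\<in>pauli_grp n. pauli_chan n P X x y)
    = sector_comb n (\<lambda>i. 16 ^ n * mtr (basis n) (mmul (basis n) (proj n i) X)) x y"
proof (cases "x \<in> basis n \<and> y \<in> basis n")
  case True
  then have x: "x \<in> basis n" and y: "y \<in> basis n" by auto
  let ?d = "of_nat (dimH n (sector x)) :: complex"
  have "(\<Sum>P\<in>pauli_grp n. pauli_chan n P X x y)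
      = (\<Sum>P\<in>pauli_grp n. \<Sum>w\<in>basis n. \<Sum>z\<in>basis n. X w z * (pauli_op n P x w * cnj (pauli_op n P y z)))"
    unfolding pauli_chan_def mmul_def madj_def
    by (rule sum.cong[OF refl], simp only: sum_distrib_right, subst sum.swap) (simp add: algebra_simps)
  also have "\<dots> = (\<Sum>w\<in>basis n. \<Sum>z\<in>basis n. X w z * (\<Sum>P\<in>pauli_grp n. pauli_op n P x w * cnj (pauli_op n P y z)))"
    by (simp add: sum_distrib_left sum.swap[of _ "pauli_grp n"])
  also have "\<dots> = (\<Sum>w\<in>basis n. \<Sum>z\<in>basis n.
      if z = w then (if x = y \<and> sector x = sector w then X w w * 16 ^ n / ?d else 0) else 0)"
    using x y by (intro sum.cong refl) (auto simp: sum_pauli_grp_op)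
  also have "\<dots> = (\<Sum>w\<in>basis n. if x = y \<and> sector w = sector x then X w w * 16 ^ n / ?d else 0)"
    by (intro sum.cong refl) (auto simp: finite_basis)
  also have "mtr (basis n) (mmul (basis n) (proj n (sector x)) X)
      = (\<Sum>z\<in>basis n. if sector z = sector x then X z z else 0)"
    unfolding mtr_mmul_proj
    by (intro sum.cong refl) (auto simp: in_sector_iff_eq_sector sector_in_idx[OF x])
  then have "(\<Sum>w\<in>basis n. if x = y \<and> sector w = sector x then X w w * 16 ^ n / ?d else 0)
      = sector_comb n (\<lambda>i. 16 ^ n * mtr (basis n) (mmul (basis n) (proj n i) X)) x y"
    unfolding sector_comb_apply[OF x]
    by (auto simp: sum_divide_distrib sum_distrib_left intro!: sum.cong)
  finally show ?thesis .
next
  case False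
  then show ?thesis
    unfolding sector_comb_outside[OF False] pauli_chan_def mmul_def madj_def pauli_op_def by auto
qed

lemma lincomb_in_opsp: "\<forall>a\<in>F. A a \<in> opsp n \<Longrightarrow> (\<lambda>x y. \<Sum>a\<in>F. c a * A a x y) \<in> opsp n"
  unfolding opsp_def supp_on_def by simp

lemma linear_on_ops_sum:
  assumes lin: "linear_on_ops n \<Lambda>" and "finite F" "\<forall>a\<in>F. A a \<in> opsp n"
  shows "\<Lambda> (\<lambda>x y. \<Sum>a\<in>F. c a * A a x y) = (\<lambda>x y. \<Sum>a\<in>F. c a * \<Lambda> (A a) x y)"
  using assms(2,3)
proof (induction F rule: finite_induct)
  case empty
  have "(\<lambda>x y. 0) \<in> opsp n" unfolding opsp_def supp_on_def by simp
  from linear_on_ops_def[THEN iffD1, OF lin, rule_format, OF this this, of 0 0] show ?case by simp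
next
  case (insert b F)
  have "(\<lambda>x y. \<Sum>a\<in>F. c a * A a x y) \<in> opsp n" "A b \<in> opsp n"
    using insert by (simp_all add: lincomb_in_opsp)
  from linear_on_ops_def[THEN iffD1, OF lin, rule_format, OF this(2,1), of "c b" 1]
  show ?case using insert by simp
qed

lemma mtr_mmul_lincomb:
  "mtr S (mmul S M (\<lambda>x y. \<Sum>a\<in>F. c a * A a x y)) = (\<Sum>a\<in>F. c a * mtr S (mmul S M (A a)))"
proof -
  have "mtr S (mmul S M (\<lambda>x y. \<Sum>a\<in>F. c a * A a x y))
      = (\<Sum>x\<in>S. \<Sum>z\<in>S. \<Sum>a\<in>F. c a * (M x z * A a z x))"
    unfolding mtr_def mmul_def by (simp add: sum_distrib_left algebra_simps)
  also have "\<dots> = (\<Sum>a\<in>F. \<Sum>x\<in>S. \<Sum>z\<in>S. c a * (M x z * A a z x))"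
    by (subst sum.swap, rule sum.cong[OF refl], rule sum.swap)
  finally show ?thesis
    unfolding mtr_def mmul_def by (simp add: sum_distrib_left)
qed

lemma mtr_mmul_commute: "mtr S (mmul S A B) = mtr S (mmul S B A)"
  unfolding mtr_def mmul_def by (subst sum.swap) (simp add: mult.commute)

lemma pauli_chan_in_opsp: "pauli_chan n P X \<in> opsp n"
  unfolding opsp_def supp_on_def pauli_chan_def mmul_def madj_def pauli_op_def by auto

lemma nproj_in_opsp: "nproj n i \<in> opsp n"
  unfolding opsp_def supp_on_def nproj_def proj_def in_sector_def by auto

lemma sum_mpow_Suc_mult:
  "(\<Sum>l\<in>S. mpow S Q (Suc k) i l * v l) = (\<Sum>j\<in>S. mpow S Q k i j * (\<Sum>l\<in>S. Q j l * v l))"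
proof -
  have "(\<Sum>l\<in>S. mpow S Q (Suc k) i l * v l) = (\<Sum>l\<in>S. \<Sum>j\<in>S. mpow S Q k i j * (Q j l * v l))"
    by (simp add: sum_distrib_right mult.assoc)
  also have "\<dots> = (\<Sum>j\<in>S. \<Sum>l\<in>S. mpow S Q k i j * (Q j l * v l))"
    by (rule sum.swap)
  finally show ?thesis by (simp add: sum_distrib_left)
qed

lemma mtr_mmul_proj_chan_sector_comb:
  assumes "linear_on_ops n \<Lambda>"
  shows "mtr (basis n) (mmul (basis n) (proj n i) (\<Lambda> (sector_comb n c))) = (\<Sum>j\<in>idx n. Qmat n \<Lambda> i j * c j)"
  unfolding sector_comb_def linear_on_ops_sum[OF assms finite_idx ballI[OF nproj_in_opsp]]
    mtr_mmul_lincomb Qmat_def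
  by (simp add: mult.commute)

lemma sum_pauli_grp_mtr_proj_chan:
  assumes "linear_on_ops n \<Lambda>"
  shows "(\<Sum>P\<in>pauli_grp n. mtr (basis n) (mmul (basis n) (proj n i) (\<Lambda> (pauli_chan n P X))))
    = 16 ^ n * (\<Sum>j\<in>idx n. Qmat n \<Lambda> i j * mtr (basis n) (mmul (basis n) (proj n j) X))"
proof -
  have "\<Lambda> (\<lambda>x y. \<Sum>P\<in>pauli_grp n. 1 * pauli_chan n P X x y)
      = (\<lambda>x y. \<Sum>P\<in>pauli_grp n. 1 * \<Lambda> (pauli_chan n P X) x y)"
    by (rule linear_on_ops_sum[OF assms finite_pauli_grp]) (simp add: pauli_chan_in_opsp)
  then have "(\<Sum>P\<in>pauli_grp n. mtr (basis n) (mmul (basis n) (proj n i) (\<Lambda> (pauli_chan n P X))))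
      = mtr (basis n) (mmul (basis n) (proj n i) (\<Lambda> (\<lambda>x y. \<Sum>P\<in>pauli_grp n. 1 * pauli_chan n P X x y)))"
    by (simp only: mtr_mmul_lincomb) simp
  also have "\<dots> = mtr (basis n) (mmul (basis n) (proj n i)
      (\<Lambda> (sector_comb n (\<lambda>j. 16 ^ n * mtr (basis n) (mmul (basis n) (proj n j) X)))))"
    by (simp add: sum_pauli_chan_eq_sector_comb)
  finally show ?thesis
    unfolding mtr_mmul_proj_chan_sector_comb[OF assms] by (simp add: sum_distrib_left algebra_simps)
qed

lemma sum_noisy_seq:
  assumes lin: "linear_on_ops n \<Lambda>"
  shows "(\<lambda>x y. \<Sum>Ps\<in>{Ps. length Ps = Suc k \<and> set Ps \<subseteq> pauli_grp n}. noisy_seq n \<Lambda> Ps \<rho> x y)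
    = sector_comb n (\<lambda>i. 16 ^ (n * Suc k) *
        (\<Sum>j\<in>idx n. mpow (idx n) (Qmat n \<Lambda>) k i j * mtr (basis n) (mmul (basis n) (proj n j) (\<Lambda> \<rho>))))"
proof (induction k arbitrary: \<rho>)
  case 0
  have "{Ps. length Ps = 0 \<and> set Ps \<subseteq> pauli_grp n} = {[]}" by auto
  then have "(\<lambda>x y. \<Sum>Ps\<in>{Ps. length Ps = Suc 0 \<and> set Ps \<subseteq> pauli_grp n}. noisy_seq n \<Lambda> Ps \<rho> x y)
      = (\<lambda>x y. \<Sum>P\<in>pauli_grp n. pauli_chan n P (\<Lambda> \<rho>) x y)"
    by (simp add: sum_lists_length_Suc)
  then show ?case
    unfolding sum_pauli_chan_eq_sector_comb sector_comb_def
    by (simp add: if_distrib if_distribR finite_idx cong: if_cong)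
next
  case (Suc k)
  \<comment> \<open>The first gate is peeled off, so Q enters on the right: Q^k Q = Q^(k+1).\<close>
  let ?tr = "\<lambda>j X. mtr (basis n) (mmul (basis n) (proj n j) X)"
  let ?M = "mpow (idx n) (Qmat n \<Lambda>)"
  have IH: "(\<Sum>Ps\<in>{Ps. length Ps = Suc k \<and> set Ps \<subseteq> pauli_grp n}. noisy_seq n \<Lambda> Ps \<sigma> x y)
      = sector_comb n (\<lambda>i. 16 ^ (n * Suc k) * (\<Sum>j\<in>idx n. ?M k i j * ?tr j (\<Lambda> \<sigma>))) x y" for \<sigma> x y
    using Suc.IH[of \<sigma>] by (simp add: fun_eq_iff)
  have "(\<lambda>x y. \<Sum>Ps\<in>{Ps. length Ps = Suc (Suc k) \<and> set Ps \<subseteq> pauli_grp n}. noisy_seq n \<Lambda> Ps \<rho> x y)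
      = (\<lambda>x y. \<Sum>P\<in>pauli_grp n. sector_comb n (\<lambda>i. 16 ^ (n * Suc k) *
          (\<Sum>j\<in>idx n. ?M k i j * ?tr j (\<Lambda> (pauli_chan n P (\<Lambda> \<rho>))))) x y)"
    by (subst sum_lists_length_Suc) (simp only: noisy_seq.simps IH)
  also have "\<dots> = sector_comb n (\<lambda>i. 16 ^ (n * Suc k) *
      (\<Sum>j\<in>idx n. ?M k i j * (\<Sum>P\<in>pauli_grp n. ?tr j (\<Lambda> (pauli_chan n P (\<Lambda> \<rho>))))))"
    unfolding sum_sector_comb by (simp add: sum_distrib_left sum.swap[of _ "pauli_grp n"])
  also have "\<dots> = sector_comb n (\<lambda>i. 16 ^ (n * Suc (Suc k)) *
      (\<Sum>j\<in>idx n. ?M (Suc k) i j * ?tr j (\<Lambda> \<rho>)))"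
    unfolding sum_pauli_grp_mtr_proj_chan[OF lin] sum_mpow_Suc_mult
    by (simp add: power_add sum_distrib_left algebra_simps)
  finally show ?case .
qed

lemma lrb_avg_eq:
  assumes "linear_on_ops n \<Lambda>"
  shows "lrb_avg n \<Lambda> E \<rho> (Suc k) = (\<Sum>i\<in>idx n. \<Sum>j\<in>idx n.
      mtr (basis n) (mmul (basis n) (nproj n i) E) * mpow (idx n) (Qmat n \<Lambda>) k i j
      * mtr (basis n) (mmul (basis n) (proj n j) (\<Lambda> \<rho>)))"
proof -
  let ?v = "\<lambda>i. \<Sum>j\<in>idx n. mpow (idx n) (Qmat n \<Lambda>) k i j * mtr (basis n) (mmul (basis n) (proj n j) (\<Lambda> \<rho>))"
  let ?N = "16 ^ (n * Suc k) :: complex"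
  have "(\<Sum>Ps\<in>{Ps. length Ps = Suc k \<and> set Ps \<subseteq> pauli_grp n}. mtr (basis n) (mmul (basis n) E (noisy_seq n \<Lambda> Ps \<rho>)))
      = mtr (basis n) (mmul (basis n) E
          (\<lambda>x y. \<Sum>Ps\<in>{Ps. length Ps = Suc k \<and> set Ps \<subseteq> pauli_grp n}. 1 * noisy_seq n \<Lambda> Ps \<rho> x y))"
    by (simp only: mtr_mmul_lincomb) simp
  also have "\<dots> = mtr (basis n) (mmul (basis n) E (sector_comb n (\<lambda>i. ?N * ?v i)))"
    using sum_noisy_seq[OF assms, of \<rho> k] by simp
  also have "\<dots> = ?N * (\<Sum>i\<in>idx n. ?v i * mtr (basis n) (mmul (basis n) (nproj n i) E))"
    unfolding sector_comb_def mtr_mmul_lincomb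
    by (simp add: mtr_mmul_commute[of _ E] sum_distrib_left algebra_simps)
  finally have "lrb_avg n \<Lambda> E \<rho> (Suc k) = (\<Sum>i\<in>idx n. ?v i * mtr (basis n) (mmul (basis n) (nproj n i) E))"
    unfolding lrb_avg_def card_pauli_grp by (simp add: power_add power_mult)
  then show ?thesis by (simp add: sum_distrib_left sum_distrib_right algebra_simps)
qed

lemma psd_on_chan:
  assumes "completely_positive n \<Lambda>" "A \<in> opsp n" "psd_on (basis n) A"
  shows "psd_on (basis n) (\<Lambda> A)"
proof -
  have single: "(\<Sum>p\<in>{0..<1::nat} \<times> basis n. f p) = (\<Sum>x\<in>basis n. f (0, x))" for f :: "_ \<Rightarrow> complex"
  proof -
    have "{0..<1::nat} \<times> basis n = Pair 0 ` basis n" by auto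
    then show ?thesis by (simp add: sum.reindex inj_on_def)
  qed
  define X :: "(nat \<times> nat list) op" where "X = (\<lambda>(a, x) (b, y). if a = 0 \<and> b = 0 then A x y else 0)"
  have "supp_on ({0..<1} \<times> basis n) X"
    using assms(2) unfolding X_def supp_on_def opsp_def by auto
  moreover have "psd_on ({0..<1} \<times> basis n) X"
    using assms(3) unfolding psd_on_def Let_def single X_def by simp
  ultimately have psd: "psd_on ({0..<1} \<times> basis n) (ampl \<Lambda> X)"
    using assms(1) unfolding completely_positive_def by blast
  have ampl: "ampl \<Lambda> X (0, x) (0, y) = \<Lambda> A x y" for x y
    unfolding ampl_def X_def by simp
  show ?thesis
    unfolding psd_on_def Let_def
  proof
    fix v :: "nat list \<Rightarrow> complex"
    show "Im (\<Sum>x\<in>basis n. \<Sum>y\<in>basis n. cnj (v x) * \<Lambda> A x y * v y) = 0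
        \<and> 0 \<le> Re (\<Sum>x\<in>basis n. \<Sum>y\<in>basis n. cnj (v x) * \<Lambda> A x y * v y)"
      using psd[unfolded psd_on_def Let_def, THEN spec, of "\<lambda>(a, x). v x"]
      unfolding single ampl by simp
  qed
qed

lemma is_state_chan:
  assumes "cptp n \<Lambda>" "is_state n \<rho>"
  shows "is_state n (\<Lambda> \<rho>)"
  using assms psd_on_chan[of n \<Lambda> \<rho>] unfolding cptp_def is_state_def trace_preserving_def by auto

lemma proj_eq_dimH_nproj: "i \<in> idx n \<Longrightarrow> proj n i x y = of_nat (dimH n i) * nproj n i x y"
  using dimH_pos[of i n] unfolding nproj_def by simp

lemma mtr_nproj:
  assumes "i \<in> idx n"
  shows "mtr (basis n) (nproj n i) = 1"
proof -
  have "mtr (basis n) (nproj n i) = (\<Sum>x\<in>basis n. if in_sector n i x then 1 else 0) / of_nat (dimH n i)"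
    unfolding mtr_def nproj_def proj_def by (simp add: sum_divide_distrib)
  then show ?thesis using dimH_pos[OF assms] by (simp add: dimH_eq_sum[symmetric])
qed

lemma sum_proj_eq_idop: "(\<Sum>i\<in>idx n. proj n i x y) = idop n x y"
proof (cases "x = y \<and> x \<in> basis n")
  case True
  then have "y = x" and x: "x \<in> basis n" by auto
  then have "(\<Sum>i\<in>idx n. proj n i x y) = (\<Sum>i\<in>idx n. if i = sector x then 1 else 0)"
    unfolding proj_def by (intro sum.cong refl) (auto simp: in_sector_iff_eq_sector)
  then show ?thesis using \<open>y = x\<close> x sector_in_idx[OF x] by (simp add: finite_idx idop_def)
qed (auto simp: proj_def idop_def in_sector_def intro: sum.neutral)

lemma Pi_l_eq_sum_proj: "Pi_l n x y = (\<Sum>i\<in>idx n - {replicate n Cc}. proj n i x y)"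
proof -
  have "replicate n Cc \<in> idx n" unfolding idx_def by simp
  then show ?thesis
    unfolding Pi_l_def Pi_c_def sum_proj_eq_idop[symmetric] by (simp add: sum.remove finite_idx)
qed

lemma mtr_mmul_idop_diff:
  "mtr (basis n) (mmul (basis n) (\<lambda>x y. idop n x y - M x y) Y)
    = mtr (basis n) Y - mtr (basis n) (mmul (basis n) M Y)"
proof -
  have "(\<Sum>z\<in>basis n. idop n x z * Y z x) = Y x x" if "x \<in> basis n" for x
    using that unfolding idop_def by (simp add: if_distrib if_distribR finite_basis cong: if_cong)
  then show ?thesis
    unfolding mtr_def mmul_def by (simp add: left_diff_distrib sum_subtractf)
qed

lemma L_ave_eq:
  assumes "trace_preserving n \<Lambda>"
  shows "L_ave n \<Lambda> = 1 - Qmat n \<Lambda> (replicate n Cc) (replicate n Cc)"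
proof -
  have c: "replicate n Cc \<in> idx n" unfolding idx_def by simp
  have "nPi_c n = nproj n (replicate n Cc)"
    using dimH_eq_prod[OF c] unfolding nPi_c_def nproj_def Pi_c_def by simp
  then show ?thesis
    using assms nproj_in_opsp mtr_nproj[OF c]
    unfolding L_ave_def Pi_l_def mtr_mmul_idop_diff Qmat_def Pi_c_def trace_preserving_def by simp
qed

lemma S_ave_eq:
  assumes "linear_on_ops n \<Lambda>"
  shows "S_ave n \<Lambda> = (1 / (3 ^ n - 2 ^ n)) *
    (\<Sum>i\<in>idx n - {replicate n Cc}. of_nat (dimH n i) * Qmat n \<Lambda> (replicate n Cc) i)"
proof -
  let ?D = "(3::complex) ^ n - 2 ^ n"
  have "Pi_l n x y = (\<Sum>i\<in>idx n - {replicate n Cc}. of_nat (dimH n i) * nproj n i x y)" for x y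
    unfolding Pi_l_eq_sum_proj by (intro sum.cong refl) (simp add: proj_eq_dimH_nproj)
  then have "nPi_l n = (\<lambda>x y. \<Sum>i\<in>idx n - {replicate n Cc}. (of_nat (dimH n i) / ?D) * nproj n i x y)"
    unfolding nPi_l_def by (simp add: sum_divide_distrib)
  then have "\<Lambda> (nPi_l n) = (\<lambda>x y. \<Sum>i\<in>idx n - {replicate n Cc}. (of_nat (dimH n i) / ?D) * \<Lambda> (nproj n i) x y)"
    by (simp only:) (rule linear_on_ops_sum[OF assms], simp_all add: finite_idx nproj_in_opsp)
  then have "S_ave n \<Lambda> = (\<Sum>i\<in>idx n - {replicate n Cc}. (of_nat (dimH n i) / ?D) * Qmat n \<Lambda> (replicate n Cc) i)"
    unfolding S_ave_def Qmat_def Pi_c_def by (simp only: mtr_mmul_lincomb)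
  then show ?thesis by (simp add: sum_distrib_left)
qed

theorem theorem1:
  fixes n :: nat and \<Lambda> :: chan and \<rho>0 E :: "nat list op"
  assumes "n \<ge> 1"
    and "cptp n \<Lambda>"
    and "is_state n \<rho>0"
    and "E \<in> opsp n" and "hermitian_on (basis n) E"
  shows "(\<exists>\<rho>t. is_state n \<rho>t \<and>
           (\<forall>m\<ge>1. lrb_avg n \<Lambda> E \<rho>0 m =
              (\<Sum>i\<in>idx n. \<Sum>j\<in>idx n.
                  mtr (basis n) (mmul (basis n) (nproj n i) E)
                  * mpow (idx n) (Qmat n \<Lambda>) (m - 1) i j
                  * mtr (basis n) (mmul (basis n) (proj n j) \<rho>t))))
       \<and> L_ave n \<Lambda> = 1 - Qmat n \<Lambda> (replicate n Cc) (replicate n Cc)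
       \<and> S_ave n \<Lambda> = (1 / (3 ^ n - 2 ^ n)) *
            (\<Sum>i\<in>idx n - {replicate n Cc}. of_nat (dimH n i) * Qmat n \<Lambda> (replicate n Cc) i)"
proof (intro conjI)
  have lin: "linear_on_ops n \<Lambda>" and tp: "trace_preserving n \<Lambda>"
    using assms(2) unfolding cptp_def by auto
  have "lrb_avg n \<Lambda> E \<rho>0 m = (\<Sum>i\<in>idx n. \<Sum>j\<in>idx n.
      mtr (basis n) (mmul (basis n) (nproj n i) E) * mpow (idx n) (Qmat n \<Lambda>) (m - 1) i j
      * mtr (basis n) (mmul (basis n) (proj n j) (\<Lambda> \<rho>0)))" if "m \<ge> 1" for m
    using that lrb_avg_eq[OF lin, of E \<rho>0 "m - 1"] by simp
  then show "\<exists>\<rho>t. is_state n \<rho>t \<and> (\<forall>m\<ge>1. lrb_avg n \<Lambda> E \<rho>0 m = (\<Sum>i\<in>idx n. \<Sum>j\<in>idx n.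
      mtr (basis n) (mmul (basis n) (nproj n i) E) * mpow (idx n) (Qmat n \<Lambda>) (m - 1) i j
      * mtr (basis n) (mmul (basis n) (proj n j) \<rho>t)))"
    using is_state_chan[OF assms(2,3)] by blast
  show "L_ave n \<Lambda> = 1 - Qmat n \<Lambda> (replicate n Cc) (replicate n Cc)"
    by (rule L_ave_eq[OF tp])
  show "S_ave n \<Lambda> = (1 / (3 ^ n - 2 ^ n)) *
      (\<Sum>i\<in>idx n - {replicate n Cc}. of_nat (dimH n i) * Qmat n \<Lambda> (replicate n Cc) i)"
    by (rule S_ave_eq[OF lin])
qed

end
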